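(* Let $W$ be a Wigner function on $\mathbb{R}^2$ with marginals $\rho_x(x)=\int W(x,p)\,dp$ and $\rho_p(p)=\int W(x,p)\,dx$ (probability densities). Let $W^+=\max\{W,0\}$, $W^-=-\min\{W,0\}$, and $\rho_x^\pm(x)=\int W^\pm(x,p)\,dp$, $\rho_p^\pm(p)=\int W^\pm(x,p)\,dx$. Assuming all entropies below are finite, $$h(\rho_x)\ge h(\rho_x^+)-h(\rho_x^-),\qquad h(\rho_p)\ge h(\rho_p^+)-h(\rho_p^-).$$
   Context: For a non-negative integrable (not necessarily normalized) function $f$ on $\mathbb{R}^k$, $h(f)=-\int f\ln f$ (with $0\ln0=0$). Note $\rho_x=\rho_x^+-\rho_x^-$ and $\rho_p=\rho_p^+-\rho_p^-$. *)

theory Defs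
  imports "HOL-Analysis.Analysis"
begin

text \<open>Differential entropy of a non-negative integrable (not necessarily normalized)
  function on the real line: h(f) = - integral of f ln f, with 0 ln 0 = 0
  (in Isabelle ln 0 = 0, so the convention is automatic).\<close>
definition diff_entropy :: "(real \<Rightarrow> real) \<Rightarrow> real" where
  "diff_entropy f = - (\<integral>x. f x * ln (f x) \<partial>lborel)"

definition normalized_state :: "(real \<Rightarrow> complex) \<Rightarrow> bool" where
  "normalized_state \<psi> \<longleftrightarrow> \<psi> \<in> borel_measurable lborel
     \<and> integrable lborel (\<lambda>x. (cmod (\<psi> x))\<^sup>2)
     \<and> (\<integral>x. (cmod (\<psi> x))\<^sup>2 \<partial>lborel) = 1"

definition wigner_pure :: "(real \<Rightarrow> complex) \<Rightarrow> real \<Rightarrow> real \<Rightarrow> real" where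
  "wigner_pure \<psi> x p = Re ((1 / pi) *
     (\<integral>y. cnj (\<psi> (x + y)) * \<psi> (x - y) * exp (\<i> * complex_of_real (2 * p * y)) \<partial>lborel))"

text \<open>A Wigner function: the Wigner function of a density operator
  rho = sum_k lambda_k |psi_k><psi_k| (a countable convex mixture of pure states).\<close>
definition is_wigner_function :: "(real \<Rightarrow> real \<Rightarrow> real) \<Rightarrow> bool" where
  "is_wigner_function W \<longleftrightarrow> (\<exists>(w::nat \<Rightarrow> real) (\<psi>::nat \<Rightarrow> real \<Rightarrow> complex).
      (\<forall>k. w k \<ge> 0) \<and> summable w \<and> (\<Sum>k. w k) = 1 \<and>
      (\<forall>k. normalized_state (\<psi> k)) \<and>
      (\<forall>x p. W x p = (\<Sum>k. w k * wigner_pure (\<psi> k) x p)))"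

end

theory Submission
  imports Defs
begin

text \<open>Since \<open>W\<^sup>+ = W + W\<^sup>-\<close>, integrating out one variable gives \<open>\<rho>\<^sup>+ = \<rho> + \<rho>\<^sup>-\<close> pointwise
  (wherever the section of \<open>W\<close> is integrable), with \<open>\<rho>, \<rho>\<^sup>- \<ge> 0\<close>. The function \<open>t \<mapsto> t ln t\<close>
  is superadditive on \<open>[0,\<infinity>)\<close>, so \<open>\<rho> ln \<rho> + \<rho>\<^sup>- ln \<rho>\<^sup>- \<le> \<rho>\<^sup>+ ln \<rho>\<^sup>+\<close>; integrating yields
  \<open>h(\<rho>\<^sup>+) \<le> h(\<rho>) + h(\<rho>\<^sup>-)\<close>.\<close>

lemma mult_ln_superadditive:
  fixes a b :: real
  assumes "a \<ge> 0" "b \<ge> 0"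
  shows "a * ln a + b * ln b \<le> (a + b) * ln (a + b)"
proof -
  have "c * ln c \<le> c * ln (a + b)" if "c \<ge> 0" "c \<le> a + b" for c
  proof (cases "c = 0")
    case False
    with that have "ln c \<le> ln (a + b)" by simp
    with that show ?thesis by (simp add: mult_left_mono)
  qed simp
  from this[of a] this[of b] assms show ?thesis
    by (simp add: distrib_right)
qed

lemma diff_entropy_add_le:
  fixes f g h :: "real \<Rightarrow> real"
  assumes sum: "AE x in lborel. f x = g x + h x"
    and g_nonneg: "AE x in lborel. g x \<ge> 0"
    and h_nonneg: "AE x in lborel. h x \<ge> 0"
    and f: "integrable lborel (\<lambda>x. f x * ln (f x))"
    and g: "integrable lborel (\<lambda>x. g x * ln (g x))"
    and h: "integrable lborel (\<lambda>x. h x * ln (h x))"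
  shows "diff_entropy f \<le> diff_entropy g + diff_entropy h"
proof -
  have "AE x in lborel. g x * ln (g x) + h x * ln (h x) \<le> f x * ln (f x)"
    using sum g_nonneg h_nonneg by eventually_elim (simp add: mult_ln_superadditive)
  then have "(\<integral>x. g x * ln (g x) + h x * ln (h x) \<partial>lborel) \<le> (\<integral>x. f x * ln (f x) \<partial>lborel)"
    using f g h by (intro integral_mono_AE) auto
  then show ?thesis
    unfolding diff_entropy_def using Bochner_Integration.integral_add[OF g h] by simp
qed

lemma integral_max_zero_eq:
  fixes f :: "real \<Rightarrow> real"
  assumes "integrable M f"
  shows "(\<integral>x. max (f x) 0 \<partial>M) = (\<integral>x. f x \<partial>M) + (\<integral>x. - min (f x) 0 \<partial>M)"
proof -
  have "(\<integral>x. max (f x) 0 \<partial>M) = (\<integral>x. f x - min (f x) 0 \<partial>M)"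
    by (rule Bochner_Integration.integral_cong) auto
  also have "\<dots> = (\<integral>x. f x \<partial>M) + (\<integral>x. - min (f x) 0 \<partial>M)"
    using assms by (subst Bochner_Integration.integral_diff) auto
  finally show ?thesis .
qed

lemma diff_entropy_marginal_pos_le:
  fixes W :: "real \<Rightarrow> real \<Rightarrow> real" and r r_pos r_neg :: "real \<Rightarrow> real"
  assumes sections: "AE x in lborel. integrable lborel (W x)"
    and r: "\<And>x. r x = (\<integral>p. W x p \<partial>lborel)"
    and r_nonneg: "AE x in lborel. r x \<ge> 0"
    and r_pos: "\<And>x. r_pos x = (\<integral>p. max (W x p) 0 \<partial>lborel)"
    and r_neg: "\<And>x. r_neg x = (\<integral>p. - min (W x p) 0 \<partial>lborel)"
    and "integrable lborel (\<lambda>x. r x * ln (r x))"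
      "integrable lborel (\<lambda>x. r_pos x * ln (r_pos x))"
      "integrable lborel (\<lambda>x. r_neg x * ln (r_neg x))"
  shows "diff_entropy r \<ge> diff_entropy r_pos - diff_entropy r_neg"
proof -
  have "AE x in lborel. r_pos x = r x + r_neg x"
    using sections by eventually_elim (simp add: r r_pos r_neg integral_max_zero_eq)
  moreover have "AE x in lborel. r_neg x \<ge> 0"
    unfolding r_neg by (intro AE_I2 integral_nonneg_AE) simp
  ultimately have "diff_entropy r_pos \<le> diff_entropy r + diff_entropy r_neg"
    using r_nonneg assms(6-8) by (intro diff_entropy_add_le)
  then show ?thesis by simp
qed

theorem mainTheorem10:
  fixes W :: "real \<Rightarrow> real \<Rightarrow> real"
    and \<rho>x \<rho>p \<rho>x_pos \<rho>x_neg \<rho>p_pos \<rho>p_neg :: "real \<Rightarrow> real"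
  assumes wig: "is_wigner_function W"
    and sec_x: "AE x in lborel. integrable lborel (\<lambda>p. W x p)"
    and sec_p: "AE p in lborel. integrable lborel (\<lambda>x. W x p)"
    and rx: "\<And>x. \<rho>x x = (\<integral>p. W x p \<partial>lborel)"
    and rp: "\<And>p. \<rho>p p = (\<integral>x. W x p \<partial>lborel)"
    and rx_prob: "AE x in lborel. \<rho>x x \<ge> 0" "integrable lborel \<rho>x" "(\<integral>x. \<rho>x x \<partial>lborel) = 1"
    and rp_prob: "AE p in lborel. \<rho>p p \<ge> 0" "integrable lborel \<rho>p" "(\<integral>p. \<rho>p p \<partial>lborel) = 1"
    and rxpos: "\<And>x. \<rho>x_pos x = (\<integral>p. max (W x p) 0 \<partial>lborel)"
    and rxneg: "\<And>x. \<rho>x_neg x = (\<integral>p. - min (W x p) 0 \<partial>lborel)"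
    and rppos: "\<And>p. \<rho>p_pos p = (\<integral>x. max (W x p) 0 \<partial>lborel)"
    and rpneg: "\<And>p. \<rho>p_neg p = (\<integral>x. - min (W x p) 0 \<partial>lborel)"
    and fin: "integrable lborel (\<lambda>x. \<rho>x x * ln (\<rho>x x))"
      "integrable lborel (\<lambda>x. \<rho>x_pos x * ln (\<rho>x_pos x))"
      "integrable lborel (\<lambda>x. \<rho>x_neg x * ln (\<rho>x_neg x))"
      "integrable lborel (\<lambda>p. \<rho>p p * ln (\<rho>p p))"
      "integrable lborel (\<lambda>p. \<rho>p_pos p * ln (\<rho>p_pos p))"
      "integrable lborel (\<lambda>p. \<rho>p_neg p * ln (\<rho>p_neg p))"
  shows "diff_entropy \<rho>x \<ge> diff_entropy \<rho>x_pos - diff_entropy \<rho>x_neg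
       \<and> diff_entropy \<rho>p \<ge> diff_entropy \<rho>p_pos - diff_entropy \<rho>p_neg"
proof
  show "diff_entropy \<rho>x \<ge> diff_entropy \<rho>x_pos - diff_entropy \<rho>x_neg"
    using sec_x rx rx_prob(1) rxpos rxneg fin(1-3)
    by (rule diff_entropy_marginal_pos_le)
  show "diff_entropy \<rho>p \<ge> diff_entropy \<rho>p_pos - diff_entropy \<rho>p_neg"
    using sec_p rp rp_prob(1) rppos rpneg fin(4-6)
    by (rule diff_entropy_marginal_pos_le[where W = "\<lambda>p x. W x p"])
qed

end
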